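(* Define polynomials $P_k(x)\in\mathbb{Q}[x]$ by $P_0(x):=0$, $P_1(x):=1$, and for $k\ge2$ $$P_k(x):=-\frac{1}{(2k-1)(k-1)}\sum_{i=1}^{k-1}\left(6x\binom{2k}{2i}(2^{2i-1}-1)+\binom{2k}{2i+2}(2^{2i+1}-1)-2^{2i}\binom{2k}{2i+1}+\binom{2k}{2i}\right)P_{k-i}(x).$$ Then for $k\ge2$ we have the recurrence $$P_k(x)=(1-12x)P_{k-1}(x)-36x^2P_{k-2}(x),$$ and the explicit formula $$P_k(x)=2^{1-2k}\sum_{j=0}^{k-1}\binom{2k}{2j+1}(1-24x)^j=\frac{1}{\sqrt{1-24x}}\left(\left(\frac{1+\sqrt{1-24x}}{2}\right)^{2k}-\left(\frac{1-\sqrt{1-24x}}{2}\right)^{2k}\right).$$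
   Context: These are the polynomials $P_k$ for which the rank moment generating functions satisfy $\mathcal{R}_{2k}=P_k(\delta_q)\mathcal{R}_2+(\text{terms built from crank moments})$, where $\delta_q=q\frac{d}{dq}$; the defining recursion above is the one induced on the coefficient of $\mathcal{R}_2$. In the last expression any fixed branch of the square root may be taken. *)

theory Defs
  imports Complex_Main "HOL-Computational_Algebra.Polynomial"
begin

function P :: "nat \<Rightarrow> rat poly" where
  "P k = (if k = 0 then 0 else if k = 1 then 1 else
     smult (- (1 / ((2 * of_nat k - 1) * (of_nat k - 1))))
       (\<Sum>i\<in>{1..k-1}.
          (smult (6 * of_nat ((2*k) choose (2*i)) * ((2::rat) ^ (2*i-1) - 1)) [:0, 1:]
           + [: of_nat ((2*k) choose (2*i+2)) * ((2::rat) ^ (2*i+1) - 1)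
                - (2::rat) ^ (2*i) * of_nat ((2*k) choose (2*i+1))
                + of_nat ((2*k) choose (2*i)) :])
          * P (k - i)))"
  by pat_completeness auto
termination
  by (relation "measure id") auto

end

theory Submission
  imports Defs
begin

text \<open>Put \<open>s^2 = 1 - 24 x\<close>, \<open>a = (1 + s)/2\<close>, \<open>b = (1 - s)/2\<close>, so that \<open>a + b = 1\<close>
  and \<open>a b = 6 x\<close>, and let \<open>f k = (a^(2k) - b^(2k)) / s\<close>.  Substituting \<open>y^(2(k-i))\<close> for
  \<open>P (k-i)\<close> in the defining recursion, each of the four parts of the coefficient gives a
  truncated even or odd part of a binomial expansion, so the sum is a combination of
  \<open>(y \<plusminus> 1)^(2k)\<close>, \<open>(y \<plusminus> 2)^(2k)\<close> and \<open>y^(2k)\<close>.  As \<open>b = 1 - a\<close>, the even powers occurring for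
  \<open>y = b\<close> are those occurring for \<open>y = a\<close>, and in the difference of the two combinations all
  that survives is \<open>-(2k-1)(k-1)(a^(2k) - b^(2k))\<close>.  So \<open>f\<close> satisfies the defining recursion
  and equals \<open>P k\<close> at every \<open>x \<noteq> 1/24\<close>.  The three-term recurrence (from \<open>a^2 + b^2 = 1 - 12 x\<close>,
  \<open>a^2 b^2 = 36 x^2\<close>) and the explicit sum (the odd part of \<open>(1 + s)^(2k)\<close>) are properties of
  \<open>f\<close>, and they transfer to \<open>P k\<close> because a polynomial is determined by its values off a point.\<close>

declare P.simps [simp del]

lemma sum_atMost_split_ends:
  fixes h :: "nat \<Rightarrow> 'a :: comm_monoid_add"
  assumes "1 \<le> k"
  shows "sum h {..k} = h 0 + sum h {1..k-1} + h k"
proof -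
  have "{..k} = insert 0 (insert k {1..k-1})" using assms by auto
  then show ?thesis using assms by (simp add: add_ac)
qed

lemma sum_lessThan_split_first:
  fixes h :: "nat \<Rightarrow> 'a :: comm_monoid_add"
  assumes "1 \<le> k"
  shows "sum h {..<k} = h 0 + sum h {1..k-1}"
proof -
  have "{..<k} = insert 0 {1..k-1}" using assms by auto
  then show ?thesis by simp
qed

lemma binomial_even_odd_split:
  fixes y t :: "'a :: comm_ring_1"
  shows "(y + t) ^ (2*k) = (\<Sum>i\<le>k. of_nat (2*k choose (2*i)) * t ^ (2*i) * y ^ (2*k - 2*i))
     + (\<Sum>i<k. of_nat (2*k choose (2*i+1)) * t ^ (2*i+1) * y ^ (2*k - (2*i+1)))"
proof -
  define g where "g j = of_nat (2*k choose j) * t ^ j * y ^ (2*k - j)" for j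
  have "(y + t) ^ (2*k) = (\<Sum>j\<le>Suc (2*k). g j)"
    using binomial_ring[of t y "2*k"] by (simp add: g_def add.commute binomial_eq_0)
  also have "\<dots> = (\<Sum>i\<le>k. g (2*i)) + (\<Sum>i\<le>k. g (Suc (2*i)))"
    by (simp only: sum.in_pairs_0 sum.distrib)
  also have "(\<Sum>i\<le>k. g (Suc (2*i))) = (\<Sum>i<k. g (Suc (2*i)))"
    by (simp add: lessThan_Suc_atMost[symmetric] g_def binomial_eq_0)
  finally show ?thesis by (simp add: g_def)
qed

lemma binomial_even_part:
  fixes y t :: "'a :: field_char_0"
  shows "(\<Sum>i\<le>k. of_nat (2*k choose (2*i)) * t ^ (2*i) * y ^ (2*k - 2*i))
       = ((y + t) ^ (2*k) + (y - t) ^ (2*k)) / 2"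
  using binomial_even_odd_split[of y t k] binomial_even_odd_split[of y "-t" k]
  by (simp add: power_mult sum_negf)

lemma binomial_odd_part:
  fixes y t :: "'a :: field_char_0"
  shows "(\<Sum>i<k. of_nat (2*k choose (2*i+1)) * t ^ (2*i+1) * y ^ (2*k - (2*i+1)))
       = ((y + t) ^ (2*k) - (y - t) ^ (2*k)) / 2"
  using binomial_even_odd_split[of y t k] binomial_even_odd_split[of y "-t" k]
  by (simp add: power_mult sum_negf)

lemma sum_choose_even_half_pow2:
  fixes y :: "'a :: field_char_0"
  shows "(\<Sum>j\<le>k. of_nat (2*k choose (2*j)) * (2 ^ (2*j) / 2 - 1) * y ^ (2*k - 2*j))
       = ((y+2) ^ (2*k) + (y-2) ^ (2*k)) / 4 - ((y+1) ^ (2*k) + (y-1) ^ (2*k)) / 2"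
proof -
  have "(\<Sum>j\<le>k. of_nat (2*k choose (2*j)) * (2 ^ (2*j) / 2 - 1) * y ^ (2*k - 2*j))
      = (\<Sum>j\<le>k. of_nat (2*k choose (2*j)) * 2 ^ (2*j) * y ^ (2*k - 2*j)) / 2
        - (\<Sum>j\<le>k. of_nat (2*k choose (2*j)) * 1 ^ (2*j) * y ^ (2*k - 2*j))"
    by (simp add: sum_divide_distrib sum_subtractf[symmetric] algebra_simps)
  then show ?thesis by (simp only: binomial_even_part) simp
qed

lemma sum_choose_even_pow2_minus_one:
  fixes y :: "'a :: field_char_0"
  assumes "1 \<le> k"
  shows "(\<Sum>i=1..k-1. of_nat (2*k choose (2*i)) * (2 ^ (2*i-1) - 1) * y ^ (2*(k-i)))
       = ((y+2) ^ (2*k) + (y-2) ^ (2*k)) / 4 - ((y+1) ^ (2*k) + (y-1) ^ (2*k)) / 2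
         + y ^ (2*k) / 2 + 1 - 2 ^ (2*k) / 2"
proof -
  define h where "h j = of_nat (2*k choose (2*j)) * (2 ^ (2*j) / 2 - 1) * y ^ (2*k - 2*j)" for j
  have "(\<Sum>i=1..k-1. of_nat (2*k choose (2*i)) * (2 ^ (2*i-1) - 1) * y ^ (2*(k-i)))
      = sum h {1..k-1}"
  proof (rule sum.cong)
    fix i assume "i \<in> {1..k-1}"
    then have "(2::'a) ^ (2*i) = 2 * 2 ^ (2*i-1)" by (cases i) auto
    then show "of_nat (2*k choose (2*i)) * (2 ^ (2*i-1) - 1) * y ^ (2*(k-i)) = h i"
      by (simp add: h_def diff_mult_distrib2)
  qed simp
  also have "\<dots> = sum h {..k} - h 0 - h k"
    using sum_atMost_split_ends[OF assms, of h] by simp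
  finally show ?thesis
    unfolding h_def sum_choose_even_half_pow2 by simp
qed

lemma sum_choose_even_shifted_pow2_minus_one:
  fixes y :: "'a :: field_char_0"
  assumes "2 \<le> k"
  shows "(\<Sum>i=1..k-1. of_nat (2*k choose (2*i+2)) * (2 ^ (2*i+1) - 1) * y ^ (2*(k-i)))
       = y^2 * (((y+2) ^ (2*k) + (y-2) ^ (2*k)) / 4 - ((y+1) ^ (2*k) + (y-1) ^ (2*k)) / 2
                + y ^ (2*k) / 2)
         - of_nat k * (2 * of_nat k - 1) * y ^ (2*k)"
proof -
  define h where "h j = of_nat (2*k choose (2*j)) * (2 ^ (2*j) / 2 - 1) * y ^ (2*k - 2*j)" for j
  have "(\<Sum>i=1..k-1. of_nat (2*k choose (2*i+2)) * (2 ^ (2*i+1) - 1) * y ^ (2*(k-i)))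
      = (\<Sum>i=1..k-1. y^2 * h (Suc i))"
  proof (rule sum.cong)
    fix i assume "i \<in> {1..k-1}"
    then have "2*(k-i) = 2 + (2*k - 2 * Suc i)" by auto
    then have "y ^ (2*(k-i)) = y^2 * y ^ (2*k - 2 * Suc i)" by (metis power_add)
    then show "of_nat (2*k choose (2*i+2)) * (2 ^ (2*i+1) - 1) * y ^ (2*(k-i)) = y^2 * h (Suc i)"
      by (simp add: h_def algebra_simps)
  qed simp
  also have "\<dots> = y^2 * (sum h {..k} - h 0 - h 1)"
  proof -
    have "(\<Sum>i=1..k-1. h (Suc i)) = sum h {2..k}"
      using sum.shift_bounds_cl_Suc_ivl[of h 1 "k-1"] assms by (simp add: numeral_2_eq_2)
    moreover have "{..k} = insert 0 (insert 1 {2..k})" using assms by auto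
    ultimately show ?thesis by (simp add: sum_distrib_left[symmetric])
  qed
  also have "h 1 = of_nat k * (2 * of_nat k - 1) * y ^ (2*k - 2)"
    using assms by (simp add: h_def choose_two)
  finally have "(\<Sum>i=1..k-1. of_nat (2*k choose (2*i+2)) * (2 ^ (2*i+1) - 1) * y ^ (2*(k-i)))
      = y^2 * (sum h {..k} - h 0) - of_nat k * (2 * of_nat k - 1) * (y^2 * y ^ (2*k - 2))"
    by (simp add: algebra_simps)
  moreover have "2*k = 2 + (2*k - 2)" using assms by simp
  then have "y^2 * y ^ (2*k - 2) = y ^ (2*k)" by (metis power_add)
  ultimately show ?thesis
    unfolding h_def sum_choose_even_half_pow2 by (simp add: algebra_simps)
qed

lemma sum_choose_odd_pow4:
  fixes y :: "'a :: field_char_0"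
  assumes "1 \<le> k"
  shows "(\<Sum>i=1..k-1. 2 ^ (2*i) * of_nat (2*k choose (2*i+1)) * y ^ (2*(k-i)))
       = y * ((y+2) ^ (2*k) - (y-2) ^ (2*k)) / 4 - 2 * of_nat k * y ^ (2*k)"
proof -
  define h where
    "h i = y / 2 * (of_nat (2*k choose (2*i+1)) * 2 ^ (2*i+1) * y ^ (2*k - (2*i+1)))" for i
  have "(\<Sum>i=1..k-1. 2 ^ (2*i) * of_nat (2*k choose (2*i+1)) * y ^ (2*(k-i))) = sum h {1..k-1}"
  proof (rule sum.cong)
    fix i assume "i \<in> {1..k-1}"
    then have "2*(k-i) = Suc (2*k - (2*i+1))" by auto
    then show "2 ^ (2*i) * of_nat (2*k choose (2*i+1)) * y ^ (2*(k-i)) = h i"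
      by (simp add: h_def algebra_simps)
  qed simp
  also have "\<dots> = sum h {..<k} - h 0"
    using sum_lessThan_split_first[OF assms, of h] by simp
  also have "sum h {..<k} = y * ((y+2) ^ (2*k) - (y-2) ^ (2*k)) / 4"
    unfolding h_def by (simp only: sum_distrib_left[symmetric] binomial_odd_part) simp
  also have "h 0 = 2 * of_nat k * (y * y ^ (2*k-1))" by (simp add: h_def)
  also have "y * y ^ (2*k-1) = y ^ (2*k)" using assms by (simp flip: power_Suc)
  finally show ?thesis .
qed

lemma sum_choose_even:
  fixes y :: "'a :: field_char_0"
  assumes "1 \<le> k"
  shows "(\<Sum>i=1..k-1. of_nat (2*k choose (2*i)) * y ^ (2*(k-i)))
       = ((y+1) ^ (2*k) + (y-1) ^ (2*k)) / 2 - y ^ (2*k) - 1"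
proof -
  define h where "h i = of_nat (2*k choose (2*i)) * 1 ^ (2*i) * y ^ (2*k - 2*i)" for i
  have "(\<Sum>i=1..k-1. of_nat (2*k choose (2*i)) * y ^ (2*(k-i))) = sum h {1..k-1}"
    by (simp add: h_def diff_mult_distrib2)
  also have "\<dots> = sum h {..k} - h 0 - h k"
    using sum_atMost_split_ends[OF assms, of h] by simp
  also have "sum h {..k} = ((y+1) ^ (2*k) + (y-1) ^ (2*k)) / 2"
    unfolding h_def by (rule binomial_even_part)
  finally show ?thesis by (simp add: h_def)
qed

definition rec_coeff :: "nat \<Rightarrow> 'a :: field_char_0 \<Rightarrow> nat \<Rightarrow> 'a" where
  "rec_coeff k x i =
     6 * of_nat (2*k choose (2*i)) * (2 ^ (2*i-1) - 1) * x
     + of_nat (2*k choose (2*i+2)) * (2 ^ (2*i+1) - 1)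
     - 2 ^ (2*i) * of_nat (2*k choose (2*i+1))
     + of_nat (2*k choose (2*i))"

text \<open>Here \<open>q\<close> stands for \<open>\<lambda>z. z^(2k)\<close>; keeping it abstract turns the cancellation in
  \<open>rec_sum_closed_form_antisymmetric\<close> into an identity that uses only the evenness of \<open>q\<close>.\<close>

definition rec_sum_closed_form ::
    "'a :: field_char_0 \<Rightarrow> 'a \<Rightarrow> ('a \<Rightarrow> 'a) \<Rightarrow> 'a \<Rightarrow> 'a" where
  "rec_sum_closed_form K p q y =
     (p + y^2) * ((q (y+2) + q (y-2)) / 4 - (q (y+1) + q (y-1)) / 2 + q y / 2)
     + p * (q 1 - q 2 / 2) - K * (2*K - 1) * q y
     - y * (q (y+2) - q (y-2)) / 4 + 2 * K * q y
     + (q (y+1) + q (y-1)) / 2 - q y - q 1"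

lemma sum_rec_coeff_pow:
  fixes x y :: "'a :: field_char_0"
  assumes "2 \<le> k"
  shows "(\<Sum>i=1..k-1. rec_coeff k x i * y ^ (2*(k-i)))
       = rec_sum_closed_form (of_nat k) (6*x) (\<lambda>z. z ^ (2*k)) y"
proof -
  have k1: "1 \<le> k" using assms by simp
  have "(\<Sum>i=1..k-1. rec_coeff k x i * y ^ (2*(k-i)))
      = 6*x * (\<Sum>i=1..k-1. of_nat (2*k choose (2*i)) * (2 ^ (2*i-1) - 1) * y ^ (2*(k-i)))
        + (\<Sum>i=1..k-1. of_nat (2*k choose (2*i+2)) * (2 ^ (2*i+1) - 1) * y ^ (2*(k-i)))
        - (\<Sum>i=1..k-1. 2 ^ (2*i) * of_nat (2*k choose (2*i+1)) * y ^ (2*(k-i)))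
        + (\<Sum>i=1..k-1. of_nat (2*k choose (2*i)) * y ^ (2*(k-i)))"
    by (simp add: rec_coeff_def sum.distrib sum_subtractf sum_distrib_left algebra_simps)
  also have "\<dots> = rec_sum_closed_form (of_nat k) (6*x) (\<lambda>z. z ^ (2*k)) y"
    using assms
    unfolding sum_choose_even_pow2_minus_one[OF k1] sum_choose_even_shifted_pow2_minus_one[OF assms]
      sum_choose_odd_pow4[OF k1] sum_choose_even[OF k1]
    by (simp add: rec_sum_closed_form_def field_simps)
  finally show ?thesis .
qed

lemma rec_sum_closed_form_antisymmetric:
  fixes a K :: "'a :: field_char_0"
  assumes even: "\<And>z. q (- z) = q z"
  shows "(2*K - 1) * (K - 1) * (q a - q (1 - a))
       + rec_sum_closed_form K (a * (1 - a)) q a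
       - rec_sum_closed_form K (a * (1 - a)) q (1 - a) = 0"
proof -
  have "q (1 - a + 1) = q (a - 2)" "q (1 - a - 1) = q a" "q (1 - a - 2) = q (a + 1)"
       "q (1 - a) = q (a - 1)"
    using even[of "a - 2"] even[of a] even[of "a + 1"] even[of "a - 1"]
    by (simp_all add: algebra_simps)
  then show ?thesis
    unfolding rec_sum_closed_form_def by (simp only:) (simp add: field_simps power2_eq_square)
qed

definition P_closed :: "'a :: field \<Rightarrow> nat \<Rightarrow> 'a" where
  "P_closed s k = (((1 + s) / 2) ^ (2*k) - ((1 - s) / 2) ^ (2*k)) / s"

lemma P_closed_rec_sum:
  fixes s x :: "'a :: field_char_0"
  assumes s: "s \<noteq> 0" "s^2 = 1 - 24*x" and k: "2 \<le> k"
  shows "P_closed s k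
       = - (1 / ((2 * of_nat k - 1) * (of_nat k - 1)))
           * (\<Sum>i=1..k-1. rec_coeff k x i * P_closed s (k-i))"
proof -
  define a where "a = (1 + s) / 2"
  define q where "q z = z ^ (2*k)" for z :: 'a
  define D where "D = (2 * of_nat k - 1) * (of_nat k - 1 :: 'a)"
  have b: "(1 - s) / 2 = 1 - a" by (simp add: a_def field_simps)
  have x: "6*x = a * (1 - a)" using s(2) by (simp add: a_def field_simps power2_eq_square)
  have "(of_nat (2*k) :: 'a) \<noteq> of_nat 1" "(of_nat k :: 'a) \<noteq> of_nat 1"
    using k by (simp_all only: of_nat_eq_iff)
  then have D: "D \<noteq> 0" by (simp add: D_def)
  have "(\<Sum>i=1..k-1. rec_coeff k x i * P_closed s (k-i))
      = ((\<Sum>i=1..k-1. rec_coeff k x i * a ^ (2*(k-i)))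
         - (\<Sum>i=1..k-1. rec_coeff k x i * (1 - a) ^ (2*(k-i)))) / s"
    by (simp add: P_closed_def a_def[symmetric] b sum_divide_distrib sum_subtractf[symmetric]
        algebra_simps)
  also have "\<dots> = (rec_sum_closed_form (of_nat k) (a * (1 - a)) q a
                  - rec_sum_closed_form (of_nat k) (a * (1 - a)) q (1 - a)) / s"
    unfolding sum_rec_coeff_pow[OF k] x q_def ..
  also have "\<dots> = - D * P_closed s k"
    using rec_sum_closed_form_antisymmetric[of q "of_nat k" a]
    by (simp add: q_def D_def P_closed_def a_def[symmetric] b field_simps)
  finally show ?thesis using D by (simp add: D_def)
qed

lemma P_closed_three_term:
  fixes s x :: "'a :: field_char_0"
  assumes s: "s \<noteq> 0" "s^2 = 1 - 24*x" and k: "2 \<le> k"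
  shows "P_closed s k = (1 - 12*x) * P_closed s (k-1) - 36*x^2 * P_closed s (k-2)"
proof -
  obtain m where m: "k = m + 2" using k by (metis add.commute le_iff_add)
  define A where "A = ((1 + s) / 2)^2"
  define B where "B = ((1 - s) / 2)^2"
  have x: "x = (1 - s^2) / 24" using s(2) by simp
  have "A + B = 1 - 12*x" "A * B = 36*x^2"
    by (simp_all add: A_def B_def x field_simps power2_eq_square)
  moreover have "A^(m+2) - B^(m+2) = (A + B) * (A^(m+1) - B^(m+1)) - A * B * (A^m - B^m)"
    by (simp add: algebra_simps)
  ultimately have rec: "A^(m+2) - B^(m+2) = (1 - 12*x) * (A^(m+1) - B^(m+1)) - 36*x^2 * (A^m - B^m)"
    by simp
  have closed: "P_closed s n = (A^n - B^n) / s" for n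
    by (simp add: P_closed_def A_def B_def power_mult)
  have "k - 1 = m + 1" "k - 2 = m" by (simp_all add: m)
  then show ?thesis
    unfolding closed m rec by (simp add: diff_divide_distrib right_diff_distrib)
qed

lemma P_closed_explicit:
  fixes s x :: "'a :: field_char_0"
  assumes s: "s \<noteq> 0" "s^2 = 1 - 24*x" and k: "1 \<le> k"
  shows "P_closed s k
       = (1/2) ^ (2*k-1) * (\<Sum>j=0..k-1. of_nat (2*k choose (2*j+1)) * (1 - 24*x) ^ j)"
proof -
  have "(\<Sum>j<k. of_nat (2*k choose (2*j+1)) * s ^ (2*j+1) * 1 ^ (2*k - (2*j+1)))
      = ((1 + s) ^ (2*k) - (1 - s) ^ (2*k)) / 2"
    using binomial_odd_part[of k s 1] by (simp add: add.commute)
  moreover have "s ^ (2*j+1) = s * (1 - 24*x) ^ j" for j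
    by (simp add: power_mult flip: s(2))
  ultimately have "(1 + s) ^ (2*k) - (1 - s) ^ (2*k)
      = 2 * s * (\<Sum>j<k. of_nat (2*k choose (2*j+1)) * (1 - 24*x) ^ j)"
    by (simp only: power_one mult_1_right) (simp add: sum_distrib_left field_simps)
  moreover have "(2::'a) ^ (2*k) = 2 * 2 ^ (2*k-1)"
    using k by (simp flip: power_Suc)
  moreover have "{0..k-1} = {..<k}" using k by auto
  ultimately show ?thesis
    using s(1)
    by (simp add: P_closed_def power_divide diff_divide_distrib[symmetric] power_one_over)
qed

lemma map_poly_of_rat_add:
  "map_poly of_rat (p + q) = map_poly of_rat p + (map_poly of_rat q :: 'a :: field_char_0 poly)"
  by (rule poly_eqI) (simp add: coeff_map_poly of_rat_add)

lemma map_poly_of_rat_diff: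
  "map_poly of_rat (p - q) = map_poly of_rat p - (map_poly of_rat q :: 'a :: field_char_0 poly)"
  by (rule poly_eqI) (simp add: coeff_map_poly of_rat_diff)

lemma map_poly_of_rat_minus:
  "map_poly of_rat (- p) = - (map_poly of_rat p :: 'a :: field_char_0 poly)"
  by (rule poly_eqI) (simp add: coeff_map_poly of_rat_minus)

lemma map_poly_of_rat_smult:
  "map_poly of_rat (smult c p) = smult (of_rat c) (map_poly of_rat p :: 'a :: field_char_0 poly)"
  by (rule map_poly_smult) (simp_all add: of_rat_mult)

lemma map_poly_of_rat_pCons:
  "map_poly of_rat (pCons c p) = pCons (of_rat c) (map_poly of_rat p :: 'a :: field_char_0 poly)"
  by (rule map_poly_pCons) simp

lemma map_poly_of_rat_mult:
  "map_poly of_rat (p * q) = map_poly of_rat p * (map_poly of_rat q :: 'a :: field_char_0 poly)"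
  by (induct p) (simp_all add: map_poly_of_rat_add map_poly_of_rat_smult map_poly_of_rat_pCons)

lemma map_poly_of_rat_sum:
  "map_poly of_rat (sum f A) = (\<Sum>a\<in>A. map_poly of_rat (f a) :: 'a :: field_char_0 poly)"
  by (induct A rule: infinite_finite_induct) (simp_all add: map_poly_of_rat_add)

lemma map_poly_of_rat_power:
  "map_poly of_rat (p ^ n) = (map_poly of_rat p :: 'a :: field_char_0 poly) ^ n"
  by (induct n) (simp_all add: map_poly_of_rat_mult)

lemmas map_poly_of_rat_simps =
  map_poly_of_rat_add map_poly_of_rat_diff map_poly_of_rat_minus map_poly_of_rat_smult
  map_poly_of_rat_pCons map_poly_of_rat_mult map_poly_of_rat_sum map_poly_of_rat_power

lemma rat_poly_eqI:
  fixes c :: "'a :: field_char_0"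
  assumes "\<And>x::'a. x \<noteq> c \<Longrightarrow> poly (map_poly of_rat p) x = poly (map_poly of_rat q) x"
  shows "p = q"
proof -
  have "map_poly of_rat (p - q) = (0 :: 'a poly)"
  proof (rule ccontr)
    assume ne: "map_poly of_rat (p - q) \<noteq> (0 :: 'a poly)"
    have "UNIV - {c} \<subseteq> {x. poly (map_poly of_rat (p - q)) x = 0}"
      using assms by (auto simp: map_poly_of_rat_diff)
    moreover have "infinite (UNIV - {c})" by (simp add: infinite_UNIV_char_0)
    ultimately show False using poly_roots_finite[OF ne] finite_subset by blast
  qed
  then show ?thesis by (simp add: map_poly_eq_0_iff)
qed

lemma rat_poly_eqI_sqrt:
  assumes "\<And>x s :: complex. s \<noteq> 0 \<Longrightarrow> s^2 = 1 - 24*x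
             \<Longrightarrow> poly (map_poly of_rat p) x = poly (map_poly of_rat q) x"
  shows "p = q"
proof (rule rat_poly_eqI[where c = "1/24 :: complex"])
  fix x :: complex assume "x \<noteq> 1/24"
  then have "csqrt (1 - 24*x) \<noteq> 0" by (auto simp: field_simps)
  then show "poly (map_poly of_rat p) x = poly (map_poly of_rat q) x"
    by (rule assms) simp
qed

lemma poly_P_rec_sum:
  fixes x :: "'a :: field_char_0"
  assumes "2 \<le> k"
  shows "poly (map_poly of_rat (P k)) x = - (1 / ((2 * of_nat k - 1) * (of_nat k - 1)))
           * (\<Sum>i=1..k-1. rec_coeff k x i * poly (map_poly of_rat (P (k-i))) x)"
  using assms
  by (subst P.simps)
     (simp add: map_poly_of_rat_simps poly_sum rec_coeff_def of_rat_mult of_rat_diff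
        of_rat_add of_rat_divide of_rat_power algebra_simps)

lemma poly_P_eq_P_closed:
  fixes s x :: "'a :: field_char_0"
  assumes s: "s \<noteq> 0" "s^2 = 1 - 24*x"
  shows "poly (map_poly of_rat (P k)) x = P_closed s k"
proof (induction k rule: less_induct)
  case (less k)
  consider "k = 0" | "k = 1" | "2 \<le> k" by linarith
  then show ?case
  proof cases
    case 1
    then show ?thesis by (simp add: P.simps P_closed_def)
  next
    case 2
    have "((1 + s) / 2)^2 - ((1 - s) / 2)^2 = s" by (simp add: field_simps power2_eq_square)
    then show ?thesis using 2 s(1) by (simp add: P.simps P_closed_def)
  next
    case 3
    have "poly (map_poly of_rat (P k)) x = - (1 / ((2 * of_nat k - 1) * (of_nat k - 1)))
           * (\<Sum>i=1..k-1. rec_coeff k x i * poly (map_poly of_rat (P (k-i))) x)"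
      by (rule poly_P_rec_sum[OF 3])
    also have "(\<Sum>i=1..k-1. rec_coeff k x i * poly (map_poly of_rat (P (k-i))) x)
        = (\<Sum>i=1..k-1. rec_coeff k x i * P_closed s (k-i))"
      using 3 by (intro sum.cong) (simp_all add: less.IH)
    finally show ?thesis using P_closed_rec_sum[OF s 3] by simp
  qed
qed

theorem proposition7p1:
  fixes k :: nat
  assumes "k \<ge> 2"
  shows "P k = [:1, -12:] * P (k - 1) - [:0, 0, 36:] * P (k - 2)
       \<and> P k = smult ((1/2) ^ (2*k - 1))
                 (\<Sum>j=0..k-1. smult (of_nat ((2*k) choose (2*j+1))) ([:1, -24:] ^ j))
       \<and> (\<forall>(x::complex) s. 1 - 24 * x \<noteq> 0 \<longrightarrow> s ^ 2 = 1 - 24 * x \<longrightarrow>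
           poly (map_poly of_rat (P k)) x
             = (1 / s) * (((1 + s) / 2) ^ (2*k) - ((1 - s) / 2) ^ (2*k)))"
proof (intro conjI allI impI)
  show "P k = [:1, -12:] * P (k - 1) - [:0, 0, 36:] * P (k - 2)"
  proof (rule rat_poly_eqI_sqrt)
    fix x s :: complex assume s: "s \<noteq> 0" "s^2 = 1 - 24*x"
    show "poly (map_poly of_rat (P k)) x
        = poly (map_poly of_rat ([:1, -12:] * P (k - 1) - [:0, 0, 36:] * P (k - 2))) x"
      using P_closed_three_term[OF s assms]
      by (simp add: map_poly_of_rat_simps poly_P_eq_P_closed[OF s] power2_eq_square algebra_simps)
  qed
  show "P k = smult ((1/2) ^ (2*k - 1))
                 (\<Sum>j=0..k-1. smult (of_nat ((2*k) choose (2*j+1))) ([:1, -24:] ^ j))"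
  proof (rule rat_poly_eqI_sqrt)
    fix x s :: complex assume s: "s \<noteq> 0" "s^2 = 1 - 24*x"
    show "poly (map_poly of_rat (P k)) x = poly (map_poly of_rat (smult ((1/2) ^ (2*k - 1))
                 (\<Sum>j=0..k-1. smult (of_nat ((2*k) choose (2*j+1))) ([:1, -24:] ^ j)))) x"
      using P_closed_explicit[OF s, of k] assms
      by (simp add: map_poly_of_rat_simps poly_sum poly_P_eq_P_closed[OF s] of_rat_power
          of_rat_divide algebra_simps)
  qed
  fix x s :: complex
  assume "1 - 24 * x \<noteq> 0" "s ^ 2 = 1 - 24 * x"
  then have "s \<noteq> 0" "s^2 = 1 - 24*x" by auto
  from poly_P_eq_P_closed[OF this]
  show "poly (map_poly of_rat (P k)) x = (1 / s) * (((1 + s) / 2) ^ (2*k) - ((1 - s) / 2) ^ (2*k))"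
    by (simp add: P_closed_def)
qed

end
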